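(* For every $\varepsilon,\delta\in(0,1)$ there exists an orchestration problem $P_{\varepsilon,\delta}$ (with at least two agents of different long-running correctness) such that, if $A_{\mathrm{rand}}$ denotes an agent of $P_{\varepsilon,\delta}$ chosen uniformly at random, then with probability at least $1-\delta$, $$\frac{\mathsf{C}_{\max}}{\mathsf{C}(A_{\mathrm{rand}})}\;\geq\;\min_{k,h\colon \mathsf{C}(A_k)\neq \mathsf{C}(A_h)} d(A_k,A_h)\;\geq\;\frac{1}{1-\varepsilon}.$$ In particular, these problems satisfy, for each fixed $\varepsilon\in(0,1)$, $$\lim_{\delta\to 0}\frac{\mathsf{C}_{\max}}{\mathsf{C}_{\mathrm{rand}}}\;\geq\;\frac{1}{1-\varepsilon},$$ where $\mathsf{C}_{\max}$ and $\mathsf{C}_{\mathrm{rand}}$ are computed for $P_{\varepsilon,\delta}$.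
   Context: An orchestration problem consists of finitely many mutually exclusive regions $\mathcal{R}_1,\dots,\mathcal{R}_M$ partitioning the input distribution, with region probabilities $\mathbb{P}(\mathcal{R}_m)\ge 0$ summing to $1$, and a finite set of agents $A_1,\dots,A_K$, each with a probability of correctness $\mathbb{P}(A_k\mid\mathcal{R}_m)\in(0,1]$ in each region (all assumed non-zero). The long-running correctness of agent $A_k$ is $\mathsf{C}(A_k)=\sum_{m=1}^M \mathbb{P}(\mathcal{R}_m)\,\mathbb{P}(A_k\mid\mathcal{R}_m)$. The theoretical maximum correctness is $\mathsf{C}_{\max}=\sum_{m=1}^M \mathbb{P}(\mathcal{R}_m)\max_k \mathbb{P}(A_k\mid\mathcal{R}_m)$ (achieved by picking, in each region, the most correct agent). If $A_{\mathrm{rand}}$ is an agent chosen uniformly at random from $\{A_1,\dots,A_K\}$, then $\mathsf{C}(A_{\mathrm{rand}})$ is a random variable and $\mathsf{C}_{\mathrm{rand}}=\mathbb{E}[\mathsf{C}(A_{\mathrm{rand}})]$. The dissimilarity of two agents is $d(A_k,A_h)=\max_m \exp\left|\log\frac{\mathbb{P}(A_k\mid\mathcal{R}_m)}{\mathbb{P}(A_h\mid\mathcal{R}_m)}\right|$. *)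

theory Defs
  imports "HOL-Analysis.Analysis"
begin

text \<open>An orchestration problem with regions indexed by m < M and agents indexed by k < K.
  p m = probability of region m; q k m = probability of correctness of agent k in region m.\<close>

definition orch_problem :: "nat \<Rightarrow> nat \<Rightarrow> (nat \<Rightarrow> real) \<Rightarrow> (nat \<Rightarrow> nat \<Rightarrow> real) \<Rightarrow> bool" where
  "orch_problem M K p q \<longleftrightarrow>
     K \<ge> 1 \<and> (\<forall>m<M. p m \<ge> 0) \<and> (\<Sum>m<M. p m) = 1 \<and>
     (\<forall>k<K. \<forall>m<M. 0 < q k m \<and> q k m \<le> 1)"

definition correctness :: "nat \<Rightarrow> (nat \<Rightarrow> real) \<Rightarrow> (nat \<Rightarrow> nat \<Rightarrow> real) \<Rightarrow> nat \<Rightarrow> real" where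
  "correctness M p q k = (\<Sum>m<M. p m * q k m)"

definition C_max :: "nat \<Rightarrow> nat \<Rightarrow> (nat \<Rightarrow> real) \<Rightarrow> (nat \<Rightarrow> nat \<Rightarrow> real) \<Rightarrow> real" where
  "C_max M K p q = (\<Sum>m<M. p m * Max {q k m | k. k < K})"

definition C_rand :: "nat \<Rightarrow> nat \<Rightarrow> (nat \<Rightarrow> real) \<Rightarrow> (nat \<Rightarrow> nat \<Rightarrow> real) \<Rightarrow> real" where
  "C_rand M K p q = (\<Sum>k<K. correctness M p q k) / real K"

definition dissim :: "nat \<Rightarrow> (nat \<Rightarrow> nat \<Rightarrow> real) \<Rightarrow> nat \<Rightarrow> nat \<Rightarrow> real" where
  "dissim M q k h = Max {exp \<bar>ln (q k m / q h m)\<bar> | m. m < M}"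

definition min_dissim :: "nat \<Rightarrow> nat \<Rightarrow> (nat \<Rightarrow> real) \<Rightarrow> (nat \<Rightarrow> nat \<Rightarrow> real) \<Rightarrow> real" where
  "min_dissim M K p q = Min {dissim M q k h | k h. k < K \<and> h < K \<and>
       correctness M p q k \<noteq> correctness M p q h}"

end

theory Submission
  imports Defs
begin

text \<open>A single region suffices. One agent is always correct and the remaining \<open>K - 1\<close> agents
  are correct with probability \<open>c = (1 - \<epsilon>)/2\<close>. Then \<open>C\<^sub>m\<^sub>a\<^sub>x = 1\<close>, every pair of agents
  with different correctness has dissimilarity \<open>1/c\<close>, and each of the \<open>K - 1\<close> weak agents
  attains ratio \<open>C\<^sub>m\<^sub>a\<^sub>x / c = 1/c\<close>. Taking \<open>K \<ge> 1/\<delta>\<close> makes the weak agents a fraction at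
  least \<open>1 - \<delta>\<close>, and taking \<open>K \<ge> 2/(1 - \<epsilon>)\<close> keeps \<open>C\<^sub>r\<^sub>a\<^sub>n\<^sub>d = (1 + (K - 1) c)/K\<close> below
  \<open>1 - \<epsilon>\<close>; the choice \<open>c = (1 - \<epsilon>)/2\<close> rather than \<open>1 - \<epsilon>\<close> leaves room for this.\<close>

lemma exp_abs_ln_div:
  fixes a b :: real
  assumes "0 < a" "0 < b"
  shows "exp \<bar>ln (a / b)\<bar> = max (a / b) (b / a)"
proof (cases "a \<le> b")
  case True
  then have "\<bar>ln (a / b)\<bar> = ln (b / a)"
    using assms by (simp add: ln_div)
  moreover have "a / b \<le> b / a"
    using True assms by (simp add: divide_simps mult_mono)
  ultimately show ?thesis
    using assms by simp
next
  case False
  then have "\<bar>ln (a / b)\<bar> = ln (a / b)"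
    using assms by (simp add: ln_div)
  moreover have "b / a \<le> a / b"
    using False assms by (simp add: divide_simps mult_mono)
  ultimately show ?thesis
    using assms by simp
qed

text \<open>Stated for \<open>Suc 0\<close> rather than \<open>1\<close>, the simplifier's normal form of \<open>1 :: nat\<close>.\<close>

lemma correctness_single_region: "correctness (Suc 0) (\<lambda>_. 1) q k = q k 0"
  by (simp add: correctness_def)

lemma dissim_single_region: "dissim (Suc 0) q k h = exp \<bar>ln (q k 0 / q h 0)\<bar>"
  by (simp add: dissim_def)

definition one_perfect_agent :: "real \<Rightarrow> nat \<Rightarrow> nat \<Rightarrow> real" where
  "one_perfect_agent c k m = (if k = 0 then 1 else c)"

context
  fixes c :: real and K :: nat
  assumes c: "0 < c" "c < 1"
begin

lemma orch_problem_one_perfect_agent: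
  "K \<ge> 1 \<Longrightarrow> orch_problem 1 K (\<lambda>_. 1) (one_perfect_agent c)"
  using c by (simp add: orch_problem_def one_perfect_agent_def)

lemma correctness_one_perfect_agent:
  "correctness (Suc 0) (\<lambda>_. 1) (one_perfect_agent c) k = (if k = 0 then 1 else c)"
  by (simp add: correctness_single_region one_perfect_agent_def)

lemma C_max_one_perfect_agent:
  assumes "K \<ge> 1"
  shows "C_max 1 K (\<lambda>_. 1) (one_perfect_agent c) = 1"
proof -
  have "{one_perfect_agent c k 0 | k. k < K} \<subseteq> {1, c}"
    by (auto simp: one_perfect_agent_def)
  moreover have "1 \<in> {one_perfect_agent c k 0 | k. k < K}"
    using assms by (auto simp: one_perfect_agent_def intro!: exI[of _ 0])
  ultimately have "Max {one_perfect_agent c k 0 | k. k < K} = 1"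
    using c by (intro Max_eqI) (auto dest: finite_subset)
  then show ?thesis
    by (simp add: C_max_def)
qed

lemma min_dissim_one_perfect_agent:
  assumes "K \<ge> 2"
  shows "min_dissim 1 K (\<lambda>_. 1) (one_perfect_agent c) = 1 / c"
proof -
  have "1 < 1 / c"
    using c by simp
  then have "c < 1 / c"
    using c by linarith
  then have max_c: "max c (1 / c) = 1 / c" "max (1 / c) c = 1 / c"
    by simp_all
  have "{dissim 1 (one_perfect_agent c) k h | k h. k < K \<and> h < K \<and>
           correctness 1 (\<lambda>_. 1) (one_perfect_agent c) k \<noteq>
           correctness 1 (\<lambda>_. 1) (one_perfect_agent c) h} = {1 / c}" (is "?D = _")
  proof (intro equalityI subsetI)
    fix x
    assume "x \<in> ?D"
    then show "x \<in> {1 / c}"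
      using c by (auto simp: dissim_single_region correctness_one_perfect_agent
          exp_abs_ln_div one_perfect_agent_def max_c split: if_splits)
  next
    fix x
    assume "x \<in> {1 / c}"
    then have "x = dissim 1 (one_perfect_agent c) 0 1"
      using c by (simp add: dissim_single_region exp_abs_ln_div one_perfect_agent_def max_c)
    moreover have "correctness 1 (\<lambda>_. 1) (one_perfect_agent c) 0 \<noteq>
        correctness 1 (\<lambda>_. 1) (one_perfect_agent c) 1"
      using c by (simp add: correctness_one_perfect_agent)
    moreover have "0 < K" "1 < K"
      using assms by simp_all
    ultimately show "x \<in> ?D"
      by blast
  qed
  then show ?thesis
    by (simp add: min_dissim_def)
qed

lemma card_agents_attaining_min_dissim:
  assumes "K \<ge> 2"
  shows "card {k. k < K \<and> C_max 1 K (\<lambda>_. 1) (one_perfect_agent c) /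
      correctness 1 (\<lambda>_. 1) (one_perfect_agent c) k \<ge> min_dissim 1 K (\<lambda>_. 1) (one_perfect_agent c)}
    \<ge> K - 1" (is "card ?A \<ge> _")
proof -
  have "{1..<K} \<subseteq> ?A"
    unfolding C_max_one_perfect_agent[OF order.trans[OF one_le_numeral assms]]
      min_dissim_one_perfect_agent[OF assms]
    by (auto simp: correctness_one_perfect_agent)
  then have "card {1..<K} \<le> card ?A"
    by (intro card_mono) auto
  then show ?thesis
    by simp
qed

lemma C_rand_one_perfect_agent:
  assumes "K \<ge> 1"
  shows "C_rand 1 K (\<lambda>_. 1) (one_perfect_agent c) = (1 + (real K - 1) * c) / real K"
proof -
  have "{..<K} = insert 0 {1..<K}"
    using assms by auto
  then have "(\<Sum>k<K. correctness 1 (\<lambda>_. 1) (one_perfect_agent c) k) = 1 + (real K - 1) * c"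
    using assms by (simp add: correctness_one_perfect_agent of_nat_diff)
  then show ?thesis
    by (simp add: C_rand_def)
qed

end

definition agent_count :: "real \<Rightarrow> real \<Rightarrow> nat" where
  "agent_count \<epsilon> \<delta> = nat \<lceil>1 / \<delta> + 2 / (1 - \<epsilon>)\<rceil>"

lemma agent_count_ge:
  assumes "\<epsilon> < 1" "0 < \<delta>"
  shows "real (agent_count \<epsilon> \<delta>) \<ge> 1 / \<delta>" "real (agent_count \<epsilon> \<delta>) \<ge> 2 / (1 - \<epsilon>)"
proof -
  have "real (agent_count \<epsilon> \<delta>) \<ge> 1 / \<delta> + 2 / (1 - \<epsilon>)"
    unfolding agent_count_def by (rule real_nat_ceiling_ge)
  moreover have "1 / \<delta> > 0" "2 / (1 - \<epsilon>) > 0"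
    using assms by simp_all
  ultimately show "real (agent_count \<epsilon> \<delta>) \<ge> 1 / \<delta>" "real (agent_count \<epsilon> \<delta>) \<ge> 2 / (1 - \<epsilon>)"
    by linarith+
qed

lemma agent_count_ge_two:
  assumes "0 \<le> \<epsilon>" "\<epsilon> < 1" "0 < \<delta>"
  shows "agent_count \<epsilon> \<delta> \<ge> 2"
proof -
  have "2 \<le> 2 / (1 - \<epsilon>)"
    using assms by (simp add: field_simps)
  then have "2 \<le> real (agent_count \<epsilon> \<delta>)"
    using agent_count_ge(2)[OF assms(2,3)] by linarith
  then show ?thesis
    by simp
qed

lemma agent_count_fraction:
  assumes "\<epsilon> < 1" "0 < \<delta>"
  shows "(1 - \<delta>) * real (agent_count \<epsilon> \<delta>) \<le> real (agent_count \<epsilon> \<delta> - 1)"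
proof -
  have "1 \<le> \<delta> * real (agent_count \<epsilon> \<delta>)"
    using agent_count_ge(1)[OF assms] assms(2) by (simp add: field_simps)
  then have "agent_count \<epsilon> \<delta> \<ge> 1"
    using assms(2) by (cases "agent_count \<epsilon> \<delta>") simp_all
  with \<open>1 \<le> \<delta> * real (agent_count \<epsilon> \<delta>)\<close> show ?thesis
    by (simp add: of_nat_diff algebra_simps)
qed

lemma C_max_div_C_rand_one_perfect_agent_ge:
  fixes K :: nat
  assumes "0 < \<epsilon>" "\<epsilon> < 1" "real K \<ge> 2 / (1 - \<epsilon>)"
  shows "C_max 1 K (\<lambda>_. 1) (one_perfect_agent ((1 - \<epsilon>) / 2)) /
      C_rand 1 K (\<lambda>_. 1) (one_perfect_agent ((1 - \<epsilon>) / 2)) \<ge> 1 / (1 - \<epsilon>)"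
proof -
  have c: "0 < (1 - \<epsilon>) / 2" "(1 - \<epsilon>) / 2 < 1"
    using assms by simp_all
  have K: "2 \<le> real K * (1 - \<epsilon>)"
    using assms by (simp add: field_simps)
  then have "K \<ge> 1"
    using assms by (cases K) simp_all
  define r where "r = (1 + (real K - 1) * ((1 - \<epsilon>) / 2)) / real K"
  have "0 < r"
    using \<open>K \<ge> 1\<close> c by (simp add: r_def add_pos_nonneg)
  moreover have "r \<le> 1 - \<epsilon>"
    using K \<open>K \<ge> 1\<close> assms(2) by (simp add: r_def field_simps)
  ultimately have "1 / (1 - \<epsilon>) \<le> 1 / r"
    by (simp add: frac_le)
  then show ?thesis
    using C_max_one_perfect_agent[OF c \<open>K \<ge> 1\<close>] C_rand_one_perfect_agent[OF c \<open>K \<ge> 1\<close>]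
    by (simp add: r_def)
qed

theorem theorem1:
  shows "\<exists>(M :: real \<Rightarrow> real \<Rightarrow> nat) (K :: real \<Rightarrow> real \<Rightarrow> nat)
           (p :: real \<Rightarrow> real \<Rightarrow> nat \<Rightarrow> real) (q :: real \<Rightarrow> real \<Rightarrow> nat \<Rightarrow> nat \<Rightarrow> real).
     (\<forall>\<epsilon> \<delta>. 0 < \<epsilon> \<and> \<epsilon> < 1 \<and> 0 < \<delta> \<and> \<delta> < 1 \<longrightarrow>
        orch_problem (M \<epsilon> \<delta>) (K \<epsilon> \<delta>) (p \<epsilon> \<delta>) (q \<epsilon> \<delta>) \<and>
        K \<epsilon> \<delta> \<ge> 2 \<and>
        (\<exists>k<K \<epsilon> \<delta>. \<exists>h<K \<epsilon> \<delta>.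
           correctness (M \<epsilon> \<delta>) (p \<epsilon> \<delta>) (q \<epsilon> \<delta>) k \<noteq> correctness (M \<epsilon> \<delta>) (p \<epsilon> \<delta>) (q \<epsilon> \<delta>) h) \<and>
        real (card {k. k < K \<epsilon> \<delta> \<and>
            C_max (M \<epsilon> \<delta>) (K \<epsilon> \<delta>) (p \<epsilon> \<delta>) (q \<epsilon> \<delta>) / correctness (M \<epsilon> \<delta>) (p \<epsilon> \<delta>) (q \<epsilon> \<delta>) k
              \<ge> min_dissim (M \<epsilon> \<delta>) (K \<epsilon> \<delta>) (p \<epsilon> \<delta>) (q \<epsilon> \<delta>)})
          \<ge> (1 - \<delta>) * real (K \<epsilon> \<delta>) \<and>
        min_dissim (M \<epsilon> \<delta>) (K \<epsilon> \<delta>) (p \<epsilon> \<delta>) (q \<epsilon> \<delta>) \<ge> 1 / (1 - \<epsilon>)) \<and>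
     (\<forall>\<epsilon>. 0 < \<epsilon> \<and> \<epsilon> < 1 \<longrightarrow>
        (\<forall>\<eta>>0. eventually (\<lambda>\<delta>.
            C_max (M \<epsilon> \<delta>) (K \<epsilon> \<delta>) (p \<epsilon> \<delta>) (q \<epsilon> \<delta>) / C_rand (M \<epsilon> \<delta>) (K \<epsilon> \<delta>) (p \<epsilon> \<delta>) (q \<epsilon> \<delta>)
              \<ge> 1 / (1 - \<epsilon>) - \<eta>) (at_right 0)))"
  apply (rule exI[where x = "\<lambda>_ _. 1"], rule exI[where x = agent_count],
      rule exI[where x = "\<lambda>_ _ _. 1"],
      rule exI[where x = "\<lambda>\<epsilon> _. one_perfect_agent ((1 - \<epsilon>) / 2)"],
      intro conjI allI impI; elim conjE)
  subgoal for \<epsilon> \<delta>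
    using agent_count_ge_two[of \<epsilon> \<delta>] by (intro orch_problem_one_perfect_agent) simp_all
  subgoal for \<epsilon> \<delta>
    by (simp add: agent_count_ge_two)
  subgoal for \<epsilon> \<delta>
    using agent_count_ge_two[of \<epsilon> \<delta>]
    by (intro exI[of _ 0] exI[of _ 1]) (simp_all add: correctness_one_perfect_agent)
  subgoal for \<epsilon> \<delta>
    using agent_count_fraction[of \<epsilon> \<delta>] agent_count_ge_two[of \<epsilon> \<delta>]
      card_agents_attaining_min_dissim[of "(1 - \<epsilon>) / 2" "agent_count \<epsilon> \<delta>"]
    by (simp add: order.trans)
  subgoal for \<epsilon> \<delta>
    using agent_count_ge_two[of \<epsilon> \<delta>]
      min_dissim_one_perfect_agent[of "(1 - \<epsilon>) / 2" "agent_count \<epsilon> \<delta>"]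
    by (simp add: divide_right_mono)
  subgoal for \<epsilon> \<eta>
    using eventually_at_right_less[of "0 :: real"]
    by eventually_elim
      (use agent_count_ge(2) C_max_div_C_rand_one_perfect_agent_ge in fastforce)
  done

end
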